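(* Let $\mathcal{G}=(\mathcal{V},\mathcal{E})$ be a finite, connected, unweighted, undirected graph, let $u,v\in\mathcal{V}$, and let $k\ge 1$. Suppose the $k$-hop ego-graphs $\mathcal{B}(u,k)$ and $\mathcal{B}(v,k)$ are not isomorphic as rooted graphs, with roots $u$ and $v$ respectively. Let $m$ be the maximum of the numbers of edges of $\mathcal{B}(u,k)$ and $\mathcal{B}(v,k)$. Then there is a length $l=O(m)$ such that the distribution of anonymous paths of length-$l$ random walks started at $u$ differs from the distribution of anonymous paths of length-$l$ random walks started at $v$.
   Context: The $k$-hop ego-graph $\mathcal{B}(v,k)$ is the subgraph of $\mathcal{G}$ induced by all nodes at shortest-path distance at most $k$ from $v$; it is rooted at $v$. A random walk of length $l$ started at $v$ is a node sequence $w=(v_0,\dots,v_l)$ with $v_0=v$ and $P(v_{i+1}\mid v_0,\dots,v_i)=\mathbb{1}[(v_i,v_{i+1})\in\mathcal{E}]/D(v_i)$, where $D(v_i)$ is the degree of $v_i$. The anonymous path of $w$ is $\phi=(\gamma_0,\dots,\gamma_l)$ with $\gamma_i=\min\{j: v_j=v_i\}$. Thus $\gamma_i$ is the first position in $w$ at which node $v_i$ occurs. *)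

theory Defs
  imports Complex_Main
begin

definition simple_graph :: "'a set \<Rightarrow> ('a \<times> 'a) set \<Rightarrow> bool" where
  "simple_graph V E \<longleftrightarrow> E \<subseteq> V \<times> V \<and> (\<forall>x y. (x,y) \<in> E \<longrightarrow> (y,x) \<in> E) \<and> (\<forall>x. (x,x) \<notin> E)"

definition is_walk :: "('a \<times> 'a) set \<Rightarrow> 'a list \<Rightarrow> bool" where
  "is_walk E w \<longleftrightarrow> w \<noteq> [] \<and> (\<forall>i. Suc i < length w \<longrightarrow> (w!i, w!Suc i) \<in> E)"

definition connected_graph :: "'a set \<Rightarrow> ('a \<times> 'a) set \<Rightarrow> bool" where
  "connected_graph V E \<longleftrightarrow> (\<forall>x\<in>V. \<forall>y\<in>V. \<exists>w. is_walk E w \<and> hd w = x \<and> last w = y)"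

definition dist_le :: "('a \<times> 'a) set \<Rightarrow> 'a \<Rightarrow> 'a \<Rightarrow> nat \<Rightarrow> bool" where
  "dist_le E x y k \<longleftrightarrow> (\<exists>w. is_walk E w \<and> hd w = x \<and> last w = y \<and> length w \<le> Suc k)"

text \<open>Vertex set of the k-hop ego-graph B(v,k); the ego-graph is the subgraph induced by it.\<close>
definition ego_nodes :: "'a set \<Rightarrow> ('a \<times> 'a) set \<Rightarrow> 'a \<Rightarrow> nat \<Rightarrow> 'a set" where
  "ego_nodes V E v k = {x \<in> V. dist_le E v x k}"

definition induced_edge_count :: "('a \<times> 'a) set \<Rightarrow> 'a set \<Rightarrow> nat" where
  "induced_edge_count E B = card {{x, y} | x y. x \<in> B \<and> y \<in> B \<and> (x, y) \<in> E}"

definition rooted_iso :: "('a \<times> 'a) set \<Rightarrow> 'a set \<Rightarrow> 'a \<Rightarrow> 'a set \<Rightarrow> 'a \<Rightarrow> bool" where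
  "rooted_iso E A a B b \<longleftrightarrow> (\<exists>f. bij_betw f A B \<and> f a = b \<and>
      (\<forall>x\<in>A. \<forall>y\<in>A. (x, y) \<in> E \<longleftrightarrow> (f x, f y) \<in> E))"

definition degree :: "('a \<times> 'a) set \<Rightarrow> 'a \<Rightarrow> nat" where
  "degree E x = card {y. (x, y) \<in> E}"

definition walk_prob :: "('a \<times> 'a) set \<Rightarrow> 'a list \<Rightarrow> real" where
  "walk_prob E w = (\<Prod>i<length w - 1.
      (if (w!i, w!Suc i) \<in> E then 1 / real (degree E (w!i)) else 0))"

definition anon_path :: "'a list \<Rightarrow> nat list" where
  "anon_path w = map (\<lambda>i. LEAST j. w!j = w!i) [0..<length w]"

definition anon_dist :: "'a set \<Rightarrow> ('a \<times> 'a) set \<Rightarrow> 'a \<Rightarrow> nat \<Rightarrow> nat list \<Rightarrow> real" where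
  "anon_dist V E v l \<phi> = (\<Sum>w\<in>{w. length w = Suc l \<and> set w \<subseteq> V \<and> hd w = v}.
      (if anon_path w = \<phi> then walk_prob E w else 0))"

end

theory Submission
  imports Defs
begin

(* Every edge of the ego-graph B(u,k) can be traversed by a walk from u that makes one detour
   a - b - a per edge, so B(u,k) is covered by a walk of at most 2m steps, and further detours
   along a fixed edge pad it to exactly 2m steps. This walk has positive probability; if the
   anonymous-path distributions from u and v agree at length 2m, some walk from v has the same
   anonymous path. Equal anonymous paths mean the walks differ by an injective renaming of nodes,
   which then maps B(u,k) into B(v,k) preserving the root and all edges. Doing the same from v
   yields embeddings in both directions, and between finite graphs these force a rooted
   isomorphism. *)

abbreviation adj :: "('a \<times> 'a) set \<Rightarrow> 'a \<Rightarrow> 'a \<Rightarrow> bool" where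
  "adj E \<equiv> \<lambda>x y. (x, y) \<in> E"

lemma is_walk_iff_successively: "is_walk E w \<longleftrightarrow> w \<noteq> [] \<and> successively (adj E) w"
  unfolding is_walk_def successively_conv_nth by simp

definition induced_edges :: "('a \<times> 'a) set \<Rightarrow> 'a set \<Rightarrow> 'a set set" where
  "induced_edges E B = {{x, y} | x y. x \<in> B \<and> y \<in> B \<and> (x, y) \<in> E}"

lemma induced_edge_count_eq_card: "induced_edge_count E B = card (induced_edges E B)"
  unfolding induced_edge_count_def induced_edges_def ..

lemma induced_edges_subset_Pow: "induced_edges E B \<subseteq> Pow B"
  unfolding induced_edges_def by auto

lemma finite_induced_edges: "finite B \<Longrightarrow> finite (induced_edges E B)"
  by (rule finite_subset[OF induced_edges_subset_Pow]) simp


fun walk_edges :: "'a list \<Rightarrow> 'a set set" where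
  "walk_edges [] = {}"
| "walk_edges [x] = {}"
| "walk_edges (x # y # zs) = insert {x, y} (walk_edges (y # zs))"

lemma walk_edges_append: "walk_edges (xs @ a # ys) = walk_edges (xs @ [a]) \<union> walk_edges (a # ys)"
  by (induction xs rule: walk_edges.induct) auto

lemma finite_walk_edges: "finite (walk_edges xs)"
  by (induction xs rule: walk_edges.induct) auto

lemma walk_edges_map: "walk_edges (map f xs) = image f ` walk_edges xs"
  by (induction xs rule: walk_edges.induct) auto

lemma walk_edgesD:
  "successively R xs \<Longrightarrow> e \<in> walk_edges xs \<Longrightarrow> \<exists>x y. e = {x, y} \<and> x \<in> set xs \<and> y \<in> set xs \<and> R x y"
  by (induction xs rule: walk_edges.induct) auto

lemma walk_edges_subset_induced_edges:
  assumes "successively (adj E) w" "set w \<subseteq> B"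
  shows "walk_edges w \<subseteq> induced_edges E B"
  using assms walk_edgesD[OF assms(1)] unfolding induced_edges_def by blast

lemma walk_detour:
  assumes "successively R P" "a \<in> set P" "R a b" "R b a"
  obtains Q where "successively R Q" "hd Q = hd P" "set Q = insert b (set P)"
    "walk_edges Q = insert {a, b} (walk_edges P)" "length Q = length P + 2"
proof -
  obtain xs ys where P: "P = xs @ a # ys"
    using assms(2) by (meson split_list)
  let ?Q = "xs @ a # b # a # ys"
  show ?thesis
  proof (rule that)
    show "successively R ?Q"
      using assms(1,3,4) unfolding P by (auto simp: successively_append_iff)
    show "hd ?Q = hd P"
      unfolding P by (cases xs) auto
    show "walk_edges ?Q = insert {a, b} (walk_edges P)"
      unfolding P using walk_edges_append[of xs a "b # a # ys"] walk_edges_append[of xs a ys]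
      by (auto simp: insert_commute)
  qed (auto simp: P)
qed

lemma walk_repeat_edge:
  assumes "successively R P" "a \<in> set P" "b \<in> set P" "R a b" "R b a" "{a, b} \<in> walk_edges P"
  shows "\<exists>Q. successively R Q \<and> hd Q = hd P \<and> set Q = set P \<and> walk_edges Q = walk_edges P
           \<and> length Q = length P + 2 * j"
proof (induction j)
  case 0
  show ?case
    using assms(1) by (intro exI[of _ P]) simp
next
  case (Suc j)
  then obtain Q where Q: "successively R Q" "hd Q = hd P" "set Q = set P"
    "walk_edges Q = walk_edges P" "length Q = length P + 2 * j"
    by blast
  have "a \<in> set Q"
    using Q(3) assms(2) by simp
  then obtain Q' where Q': "successively R Q'" "hd Q' = hd Q" "set Q' = insert b (set Q)"
    "walk_edges Q' = insert {a, b} (walk_edges Q)" "length Q' = length Q + 2"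
    using walk_detour[OF Q(1) _ assms(4,5)] by blast
  show ?case
    using Q Q' assms(3,6) by (intro exI[of _ Q']) (simp add: insert_absorb)
qed

text \<open>Greedily adding a detour along an untraversed edge keeps the length of the walk equal to
  twice the number of traversed edges plus one; the process stops once every edge of \<open>B\<close> at a
  visited node has been traversed.\<close>
lemma covering_walk:
  assumes finB: "finite B" and uB: "u \<in> B" and sym: "\<And>x y. (x, y) \<in> E \<Longrightarrow> (y, x) \<in> E"
  obtains P where "successively (adj E) P" "hd P = u" "set P \<subseteq> B"
    "length P = 2 * card (walk_edges P) + 1"
    "\<And>a b. a \<in> set P \<Longrightarrow> b \<in> B \<Longrightarrow> (a, b) \<in> E \<Longrightarrow> {a, b} \<in> walk_edges P"
proof -
  define good where "good P \<longleftrightarrow> successively (adj E) P \<and> hd P = u \<and> set P \<subseteq> B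
    \<and> length P = 2 * card (walk_edges P) + 1" for P
  define complete where
    "complete P \<longleftrightarrow> (\<forall>a\<in>set P. \<forall>b\<in>B. (a, b) \<in> E \<longrightarrow> {a, b} \<in> walk_edges P)" for P
  have "\<exists>Q. good Q \<and> complete Q" if "good P" for P
    using that
  proof (induction "card (induced_edges E B) - card (walk_edges P)" arbitrary: P rule: less_induct)
    case less
    show ?case
    proof (cases "complete P")
      case True
      with less.prems show ?thesis by blast
    next
      case False
      then obtain a b where ab: "a \<in> set P" "b \<in> B" "(a, b) \<in> E" "{a, b} \<notin> walk_edges P"
        unfolding complete_def by blast
      obtain Q where Q: "successively (adj E) Q" "hd Q = hd P" "set Q = insert b (set P)"
        "walk_edges Q = insert {a, b} (walk_edges P)" "length Q = length P + 2"
        using walk_detour[of "adj E" P a b] less.prems ab sym unfolding good_def by blast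
      have card_Q: "card (walk_edges Q) = Suc (card (walk_edges P))"
        using Q(4) ab(4) finite_walk_edges[of P] by simp
      have good_Q: "good Q"
        using less.prems Q card_Q ab(2) unfolding good_def by auto
      then have "card (walk_edges Q) \<le> card (induced_edges E B)"
        unfolding good_def
        using card_mono[OF finite_induced_edges[OF finB] walk_edges_subset_induced_edges] by blast
      then show ?thesis
        using less.hyps[OF _ good_Q] card_Q by simp
    qed
  qed
  moreover have "good [u]"
    using uB unfolding good_def by simp
  ultimately show ?thesis
    using that unfolding good_def complete_def by blast
qed

lemma complete_walk_contains_walk:
  assumes complete: "\<And>a b. a \<in> set P \<Longrightarrow> b \<in> B \<Longrightarrow> (a, b) \<in> E \<Longrightarrow> {a, b} \<in> walk_edges P"
    and P: "successively (adj E) P"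
    and q: "successively (adj E) q" "set q \<subseteq> B" "q \<noteq> []" "hd q \<in> set P"
  shows "set q \<subseteq> set P"
  using q
proof (induction q rule: rev_induct)
  case (snoc y q)
  show ?case
  proof (cases "q = []")
    case True
    with snoc.prems show ?thesis by simp
  next
    case False
    then have "set q \<subseteq> set P" "(last q, y) \<in> E"
      using snoc by (auto simp: successively_append_iff)
    moreover have "last q \<in> set P"
      using \<open>set q \<subseteq> set P\<close> False by auto
    ultimately have "{last q, y} \<in> walk_edges P"
      using complete snoc.prems(2) by simp
    then have "y \<in> set P"
      using walk_edgesD[OF P] by (metis doubleton_eq_iff)
    with \<open>set q \<subseteq> set P\<close> show ?thesis by simp
  qed
qed simp


subsection \<open>Ego-graphs\<close>

lemma root_in_ego_nodes: "u \<in> V \<Longrightarrow> u \<in> ego_nodes V E u k"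
  unfolding ego_nodes_def dist_le_def is_walk_def by (auto intro!: exI[of _ "[u]"])

lemma finite_ego_nodes: "finite V \<Longrightarrow> finite (ego_nodes V E u k)"
  unfolding ego_nodes_def by simp

lemma in_ego_nodesI:
  assumes "successively (adj E) q" "q \<noteq> []" "hd q = v" "last q = y" "set q \<subseteq> V"
    "length q \<le> Suc k"
  shows "y \<in> ego_nodes V E v k"
  using assms last_in_set unfolding ego_nodes_def dist_le_def is_walk_iff_successively by blast

lemma neighbour_in_ego_nodes:
  assumes "simple_graph V E" "u \<in> V" "(u, x) \<in> E" "k \<ge> 1"
  shows "x \<in> ego_nodes V E u k"
  using assms by (intro in_ego_nodesI[of E "[u, x]"]) (auto simp: simple_graph_def)

lemma set_walk_subset: "successively (adj E) q \<Longrightarrow> E \<subseteq> V \<times> V \<Longrightarrow> hd q \<in> V \<Longrightarrow> set q \<subseteq> V"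
  by (induction q rule: induct_list012) auto

text \<open>Every prefix of a walk of length at most \<open>k\<close> from \<open>u\<close> is such a walk as well.\<close>
lemma walk_within_ego_nodes:
  assumes sg: "simple_graph V E" and uV: "u \<in> V" and x: "x \<in> ego_nodes V E u k"
  obtains q where "successively (adj E) q" "q \<noteq> []" "hd q = u" "last q = x"
    "set q \<subseteq> ego_nodes V E u k" "length q \<le> Suc k"
proof -
  obtain q where q: "is_walk E q" "hd q = u" "last q = x" "length q \<le> Suc k"
    using x unfolding ego_nodes_def dist_le_def by blast
  have ne: "q \<noteq> []" and walk: "successively (adj E) q"
    using q(1) is_walk_iff_successively by auto
  have "q ! i \<in> ego_nodes V E u k" if i: "i < length q" for i
  proof (rule in_ego_nodesI)
    show "successively (adj E) (take (Suc i) q)"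
      using walk by (metis append_take_drop_id successively_append_iff)
    show "hd (take (Suc i) q) = u" using q(2) ne by simp
    show "last (take (Suc i) q) = q ! i" using i by (simp add: take_Suc_conv_app_nth)
    have "set q \<subseteq> V"
      using walk q(2) uV sg unfolding simple_graph_def by (intro set_walk_subset) auto
    then show "set (take (Suc i) q) \<subseteq> V"
      by (meson in_set_takeD subset_iff)
  qed (use q(4) ne in auto)
  then have "set q \<subseteq> ego_nodes V E u k"
    by (metis in_set_conv_nth subsetI)
  then show ?thesis
    using that q ne walk by blast
qed

text \<open>The edge \<open>{u, x}\<close> pads the covering walk to the common length \<open>2 M + 1\<close>; this is where
  \<open>k \<ge> 1\<close> and a neighbour of \<open>u\<close> are needed.\<close>
lemma ego_covering_walk:
  assumes finV: "finite V" and sg: "simple_graph V E" and uV: "u \<in> V" and k: "k \<ge> 1"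
    and ux: "(u, x) \<in> E" and M: "induced_edge_count E (ego_nodes V E u k) \<le> M"
  obtains W where "successively (adj E) W" "hd W = u" "set W = ego_nodes V E u k"
    "walk_edges W = induced_edges E (ego_nodes V E u k)" "length W = 2 * M + 1"
proof -
  define B where "B = ego_nodes V E u k"
  have sym: "\<And>a b. (a, b) \<in> E \<Longrightarrow> (b, a) \<in> E"
    using sg unfolding simple_graph_def by blast
  have uB: "u \<in> B" unfolding B_def using root_in_ego_nodes[OF uV] .
  have "finite B" unfolding B_def using finite_ego_nodes[OF finV] .
  then obtain P where P: "successively (adj E) P" "hd P = u" "set P \<subseteq> B"
    "length P = 2 * card (walk_edges P) + 1"
    and complete: "\<And>a b. a \<in> set P \<Longrightarrow> b \<in> B \<Longrightarrow> (a, b) \<in> E \<Longrightarrow> {a, b} \<in> walk_edges P"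
    using covering_walk uB sym by metis
  have "P \<noteq> []" using P(4) by auto
  have set_P: "set P = B"
  proof
    show "B \<subseteq> set P"
    proof
      fix y assume "y \<in> B"
      then obtain q where q: "successively (adj E) q" "q \<noteq> []" "hd q = u" "last q = y" "set q \<subseteq> B"
        using walk_within_ego_nodes[OF sg uV] unfolding B_def by metis
      have "hd q \<in> set P"
        using q(3) P(2) \<open>P \<noteq> []\<close> hd_in_set by metis
      then have "set q \<subseteq> set P"
        using complete_walk_contains_walk[OF complete P(1) q(1,5,2)] by blast
      then show "y \<in> set P"
        using q(2,4) by auto
    qed
  qed (rule P(3))
  have edges_P: "walk_edges P = induced_edges E B"
  proof
    show "walk_edges P \<subseteq> induced_edges E B"
      using walk_edges_subset_induced_edges[OF P(1,3)] .
    show "induced_edges E B \<subseteq> walk_edges P"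
      unfolding induced_edges_def using complete set_P by blast
  qed
  have "card (walk_edges P) \<le> M"
    using M edges_P unfolding B_def induced_edge_count_eq_card by simp
  moreover have "x \<in> set P"
    using neighbour_in_ego_nodes[OF sg uV ux k] set_P unfolding B_def by simp
  moreover have "{u, x} \<in> walk_edges P"
    using complete uB set_P \<open>x \<in> set P\<close> ux by blast
  ultimately obtain W where "successively (adj E) W" "hd W = u" "set W = set P"
    "walk_edges W = walk_edges P" "length W = 2 * M + 1"
    using walk_repeat_edge[OF P(1) _ _ ux sym[OF ux], of "M - card (walk_edges P)"]
      P(2,4) set_P uB by auto
  then show ?thesis
    using that set_P edges_P unfolding B_def by metis
qed


subsection \<open>Anonymous paths\<close>

lemma length_anon_path [simp]: "length (anon_path w) = length w"
  unfolding anon_path_def by simp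

lemma nth_anon_path: "i < length w \<Longrightarrow> anon_path w ! i = (LEAST j. w ! j = w ! i)"
  unfolding anon_path_def by simp

lemma nth_nth_anon_path: "i < length w \<Longrightarrow> w ! (anon_path w ! i) = w ! i"
  unfolding nth_anon_path by (rule LeastI) simp

lemma anon_path_nth_eq_iff:
  "i < length w \<Longrightarrow> j < length w \<Longrightarrow> anon_path w ! i = anon_path w ! j \<longleftrightarrow> w ! i = w ! j"
  by (metis nth_anon_path nth_nth_anon_path)

lemma anon_path_eq_obtains_renaming:
  assumes anon: "anon_path w = anon_path w'"
  obtains f where "inj_on f (set w)" "map f w = w'"
proof
  have len: "length w' = length w"
    using arg_cong[OF anon, of length] by simp
  define f where "f x = w' ! (LEAST j. w ! j = x)" for x
  have f_nth: "f (w ! i) = w' ! i" if "i < length w" for i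
    using that len nth_nth_anon_path[of i w'] unfolding f_def anon[symmetric]
    by (simp add: nth_anon_path)
  show "map f w = w'"
    using len f_nth by (intro nth_equalityI) auto
  show "inj_on f (set w)"
  proof (rule inj_onI)
    fix x y assume "x \<in> set w" "y \<in> set w" "f x = f y"
    then obtain i j where "i < length w" "j < length w" "x = w ! i" "y = w ! j" "w' ! i = w' ! j"
      using f_nth by (metis in_set_conv_nth)
    then show "x = y"
      using anon_path_nth_eq_iff[of _ w] anon_path_nth_eq_iff[of _ w'] len anon by metis
  qed
qed


lemma degree_pos:
  assumes "finite V" "E \<subseteq> V \<times> V" "(x, y) \<in> E"
  shows "degree E x > 0"
proof -
  have "{y. (x, y) \<in> E} \<subseteq> V"
    using assms(2) by auto
  then have "finite {y. (x, y) \<in> E}"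
    using assms(1) finite_subset by blast
  then show ?thesis
    unfolding degree_def using assms(3) card_gt_0_iff by blast
qed

lemma walk_prob_pos_iff:
  assumes "finite V" "E \<subseteq> V \<times> V"
  shows "walk_prob E w > 0 \<longleftrightarrow> successively (adj E) w"
proof
  assume pos: "walk_prob E w > 0"
  show "successively (adj E) w"
    unfolding successively_conv_nth
  proof (intro allI impI)
    fix i assume "Suc i < length w"
    then have "i \<in> {..<length w - 1}" by simp
    show "(w ! i, w ! Suc i) \<in> E"
    proof (rule ccontr)
      assume "(w ! i, w ! Suc i) \<notin> E"
      then have "walk_prob E w = 0"
        unfolding walk_prob_def using \<open>i \<in> {..<length w - 1}\<close> by (intro prod_zero) auto
      with pos show False by simp
    qed
  qed
next
  assume "successively (adj E) w"
  then have "(w ! i, w ! Suc i) \<in> E" if "i < length w - 1" for i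
    using that successively_nth by fastforce
  then show "walk_prob E w > 0"
    unfolding walk_prob_def using degree_pos[OF assms] by (intro prod_pos) auto
qed

lemma anon_dist_pos_iff:
  assumes "finite V"
  shows "anon_dist V E v l \<phi> > 0 \<longleftrightarrow>
    (\<exists>w. length w = Suc l \<and> set w \<subseteq> V \<and> hd w = v \<and> anon_path w = \<phi> \<and> walk_prob E w > 0)"
proof -
  have fin: "finite {w. length w = Suc l \<and> set w \<subseteq> V \<and> hd w = v}"
    by (rule finite_subset[OF _ finite_lists_length_eq[OF assms, of "Suc l"]]) auto
  have nonneg: "walk_prob E w \<ge> 0" for w
    unfolding walk_prob_def by (rule prod_nonneg) auto
  show ?thesis
  proof
    assume pos: "anon_dist V E v l \<phi> > 0"
    show "\<exists>w. length w = Suc l \<and> set w \<subseteq> V \<and> hd w = v \<and> anon_path w = \<phi> \<and> walk_prob E w > 0"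
    proof (rule ccontr)
      assume "\<not> ?thesis"
      then have "anon_dist V E v l \<phi> \<le> 0"
        unfolding anon_dist_def by (intro sum_nonpos) (auto simp: not_less)
      with pos show False by simp
    qed
  next
    assume "\<exists>w. length w = Suc l \<and> set w \<subseteq> V \<and> hd w = v \<and> anon_path w = \<phi> \<and> walk_prob E w > 0"
    then show "anon_dist V E v l \<phi> > 0"
      unfolding anon_dist_def using fin nonneg by (auto intro!: sum_pos2)
  qed
qed


subsection \<open>Rooted embeddings\<close>

definition rooted_embedding ::
  "('a \<times> 'a) set \<Rightarrow> 'a set \<Rightarrow> 'a \<Rightarrow> 'a set \<Rightarrow> 'a \<Rightarrow> ('a \<Rightarrow> 'a) \<Rightarrow> bool" where
  "rooted_embedding E A a B b f \<longleftrightarrow> inj_on f A \<and> f ` A \<subseteq> B \<and> f a = b \<and>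
     (\<forall>x\<in>A. \<forall>y\<in>A. (x, y) \<in> E \<longrightarrow> (f x, f y) \<in> E)"

lemma inj_on_image_induced_edges: "inj_on f A \<Longrightarrow> inj_on (image f) (induced_edges E A)"
  by (rule inj_on_subset[OF inj_on_image_Pow induced_edges_subset_Pow])

lemma rooted_embedding_image_induced_edges:
  assumes "rooted_embedding E A a B b f"
  shows "image f ` induced_edges E A \<subseteq> induced_edges E B"
proof
  fix e assume "e \<in> image f ` induced_edges E A"
  then obtain x y where "e = {f x, f y}" "x \<in> A" "y \<in> A" "(x, y) \<in> E"
    unfolding induced_edges_def by auto
  moreover from this have "f x \<in> B" "f y \<in> B" "(f x, f y) \<in> E"
    using assms unfolding rooted_embedding_def by auto
  ultimately show "e \<in> induced_edges E B"
    unfolding induced_edges_def by blast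
qed

text \<open>Counting nodes and edges: embeddings in both directions make \<open>f\<close> bijective on both.\<close>
lemma rooted_embedding_onto_if_embedding_back:
  assumes finA: "finite A" and finB: "finite B"
    and f: "rooted_embedding E A a B b f" and g: "rooted_embedding E B b A a g"
  shows "f ` A = B" "image f ` induced_edges E A = induced_edges E B"
proof -
  have inj_f: "inj_on f A" and f_A: "f ` A \<subseteq> B" and inj_g: "inj_on g B" and g_B: "g ` B \<subseteq> A"
    using f g unfolding rooted_embedding_def by auto
  have "card A = card B"
    using card_inj_on_le[OF inj_f f_A finB] card_inj_on_le[OF inj_g g_B finA] by simp
  then show "f ` A = B"
    using card_subset_eq[OF finB f_A] card_image[OF inj_f] by simp
  note f_edges = rooted_embedding_image_induced_edges[OF f]
  have "card (induced_edges E A) = card (induced_edges E B)"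
    using card_inj_on_le[OF inj_on_image_induced_edges[OF inj_f] f_edges]
      card_inj_on_le[OF inj_on_image_induced_edges[OF inj_g] rooted_embedding_image_induced_edges[OF g]]
      finite_induced_edges finA finB by fastforce
  then show "image f ` induced_edges E A = induced_edges E B"
    using card_subset_eq[OF finite_induced_edges[OF finB] f_edges]
      card_image[OF inj_on_image_induced_edges[OF inj_f]] by simp
qed

lemma rooted_iso_if_embeddings:
  assumes finA: "finite A" and finB: "finite B" and sym: "\<And>x y. (x, y) \<in> E \<Longrightarrow> (y, x) \<in> E"
    and f: "rooted_embedding E A a B b f" and g: "rooted_embedding E B b A a g"
  shows "rooted_iso E A a B b"
proof -
  have inj: "inj_on f A" and root: "f a = b"
    and f_edges: "\<forall>x\<in>A. \<forall>y\<in>A. (x, y) \<in> E \<longrightarrow> (f x, f y) \<in> E"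
    using f unfolding rooted_embedding_def by auto
  note onto = rooted_embedding_onto_if_embedding_back[OF finA finB f g]
  have "(x, y) \<in> E" if xy: "x \<in> A" "y \<in> A" "(f x, f y) \<in> E" for x y
  proof -
    have "{f x, f y} \<in> induced_edges E B"
      using xy onto(1) unfolding induced_edges_def by blast
    then obtain e where "e \<in> induced_edges E A" "f ` e = {f x, f y}"
      unfolding onto(2)[symmetric] by (rule imageE) simp
    then obtain p q where pq: "p \<in> A" "q \<in> A" "(p, q) \<in> E" "f ` {p, q} = f ` {x, y}"
      unfolding induced_edges_def by auto
    then have "{p, q} = {x, y}"
      using inj_on_image_eq_iff[OF inj, of "{p, q}" "{x, y}"] xy by simp
    then show ?thesis
      using pq(3) sym by (metis doubleton_eq_iff)
  qed
  then show ?thesis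
    unfolding rooted_iso_def bij_betw_def using inj onto(1) root f_edges by blast
qed

lemma walk_renaming_embeds_ego:
  assumes sg: "simple_graph V E" and uV: "u \<in> V"
    and w: "hd w = u" "set w = ego_nodes V E u k" "walk_edges w = induced_edges E (ego_nodes V E u k)"
    and w': "successively (adj E) w'" "set w' \<subseteq> V" "hd w' = v"
    and anon: "anon_path w = anon_path w'"
  shows "\<exists>f. rooted_embedding E (ego_nodes V E u k) u (ego_nodes V E v k) v f"
proof -
  let ?A = "ego_nodes V E u k"
  have "w \<noteq> []"
    using w(2) root_in_ego_nodes[OF uV, of E k] by auto
  obtain f where inj: "inj_on f (set w)" and map: "map f w = w'"
    using anon_path_eq_obtains_renaming[OF anon] by blast
  have root: "f u = v"
    using map w(1) w'(3) \<open>w \<noteq> []\<close> by (metis hd_map)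
  have edges: "(f a, f b) \<in> E" if "a \<in> ?A" "b \<in> ?A" "(a, b) \<in> E" for a b
  proof -
    have "{a, b} \<in> walk_edges w"
      using that w(3) unfolding induced_edges_def by blast
    then have "f ` {a, b} \<in> walk_edges w'"
      unfolding map[symmetric] walk_edges_map by (rule imageI)
    then obtain x y where "{f a, f b} = {x, y}" "(x, y) \<in> E"
      using walk_edgesD[OF w'(1), of "{f a, f b}"] by auto
    then show ?thesis
      using sg unfolding simple_graph_def by (auto simp: doubleton_eq_iff)
  qed
  have "f y \<in> ego_nodes V E v k" if "y \<in> ?A" for y
  proof -
    obtain q where q: "successively (adj E) q" "q \<noteq> []" "hd q = u" "last q = y"
      "set q \<subseteq> ?A" "length q \<le> Suc k"
      using walk_within_ego_nodes[OF sg uV \<open>y \<in> ?A\<close>] .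
    have "successively (adj E) (map f q)"
      unfolding successively_map using q(1) by (rule successively_mono) (use q(5) edges in blast)
    moreover have "set (map f q) \<subseteq> V"
      using q(5) w(2) w'(2) unfolding map[symmetric] by auto
    ultimately show ?thesis
      using q root by (intro in_ego_nodesI[of E "map f q"]) (auto simp: hd_map last_map)
  qed
  then show ?thesis
    unfolding rooted_embedding_def using inj w(2) root edges by auto
qed

lemma anon_dist_eq_imp_rooted_embedding:
  assumes finV: "finite V" and sg: "simple_graph V E" and aV: "a \<in> V" and k: "k \<ge> 1"
    and ax: "(a, x) \<in> E" and M: "induced_edge_count E (ego_nodes V E a k) \<le> M"
    and eq: "anon_dist V E a (2 * M) = anon_dist V E b (2 * M)"
  shows "\<exists>f. rooted_embedding E (ego_nodes V E a k) a (ego_nodes V E b k) b f"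
proof -
  obtain W where W: "successively (adj E) W" "hd W = a" "set W = ego_nodes V E a k"
    "walk_edges W = induced_edges E (ego_nodes V E a k)" "length W = Suc (2 * M)"
    using ego_covering_walk[OF finV sg aV k ax M] by (metis Suc_eq_plus1)
  have EV: "E \<subseteq> V \<times> V"
    using sg unfolding simple_graph_def by blast
  have "set W \<subseteq> V"
    using W(3) unfolding ego_nodes_def by auto
  then have "anon_dist V E a (2 * M) (anon_path W) > 0"
    using W walk_prob_pos_iff[OF finV EV] anon_dist_pos_iff[OF finV] by blast
  then obtain w' where "set w' \<subseteq> V" "hd w' = b" "anon_path W = anon_path w'" "walk_prob E w' > 0"
    unfolding eq anon_dist_pos_iff[OF finV] by metis
  then show ?thesis
    using walk_renaming_embeds_ego[OF sg aV W(2,3,4)] walk_prob_pos_iff[OF finV EV] by blast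
qed

lemma connected_graph_has_neighbour:
  assumes "connected_graph V E" "u \<in> V" "v \<in> V" "u \<noteq> v"
  obtains x where "(u, x) \<in> E"
proof -
  obtain w where w: "is_walk E w" "hd w = u" "last w = v"
    using assms unfolding connected_graph_def by blast
  then obtain y w'' where "w = u # y # w''"
    using assms(4) unfolding is_walk_def by (metis last.simps list.collapse)
  then show ?thesis
    using that w(1) unfolding is_walk_def by (metis Suc_less_eq length_Cons nth_Cons_0 nth_Cons_Suc zero_less_Suc)
qed

theorem proposition1:
  shows "\<exists>C::nat. \<forall>(V::nat set) (E::(nat \<times> nat) set) u v (k::nat).
    finite V \<and> simple_graph V E \<and> connected_graph V E \<and> u \<in> V \<and> v \<in> V \<and> k \<ge> 1 \<and>
    \<not> rooted_iso E (ego_nodes V E u k) u (ego_nodes V E v k) v \<longrightarrow>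
    (\<exists>l::nat. l \<le> C * max (induced_edge_count E (ego_nodes V E u k))
                             (induced_edge_count E (ego_nodes V E v k)) \<and>
              anon_dist V E u l \<noteq> anon_dist V E v l)"
proof (rule exI[of _ 2], intro allI impI, elim conjE)
  fix V :: "nat set" and E :: "(nat \<times> nat) set" and u v k :: nat
  assume finV: "finite V" and sg: "simple_graph V E" and conn: "connected_graph V E"
    and uV: "u \<in> V" and vV: "v \<in> V" and k: "k \<ge> 1"
    and not_iso: "\<not> rooted_iso E (ego_nodes V E u k) u (ego_nodes V E v k) v"
  let ?M = "max (induced_edge_count E (ego_nodes V E u k)) (induced_edge_count E (ego_nodes V E v k))"
  have "u \<noteq> v"
    using not_iso unfolding rooted_iso_def by (metis bij_betw_id id_apply)
  then obtain x y where ux: "(u, x) \<in> E" and vy: "(v, y) \<in> E"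
    using connected_graph_has_neighbour[OF conn] uV vV by metis
  have sym: "\<And>a b. (a, b) \<in> E \<Longrightarrow> (b, a) \<in> E"
    using sg unfolding simple_graph_def by blast
  have "anon_dist V E u (2 * ?M) \<noteq> anon_dist V E v (2 * ?M)"
  proof
    assume eq: "anon_dist V E u (2 * ?M) = anon_dist V E v (2 * ?M)"
    obtain f g where "rooted_embedding E (ego_nodes V E u k) u (ego_nodes V E v k) v f"
      "rooted_embedding E (ego_nodes V E v k) v (ego_nodes V E u k) u g"
      using anon_dist_eq_imp_rooted_embedding[OF finV sg uV k ux max.cobounded1 eq]
        anon_dist_eq_imp_rooted_embedding[OF finV sg vV k vy max.cobounded2 eq[symmetric]] by blast
    then show False
      using rooted_iso_if_embeddings[OF finite_ego_nodes[OF finV] finite_ego_nodes[OF finV] sym] not_iso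
      by blast
  qed
  then show "\<exists>l. l \<le> 2 * ?M \<and> anon_dist V E u l \<noteq> anon_dist V E v l"
    by blast
qed

end
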